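(* Let $\gamma>0$ and $\varepsilon>0$. In the setting below, the algorithm PrivTree$(D,\lambda,\theta,\delta)$ with any $\theta\in\mathbb{R}$, with $\lambda\ge \frac{2e^{\gamma}-1}{e^{\gamma}-1}\cdot\frac{1}{\varepsilon}$ and $\delta=\gamma\lambda$, satisfies $\varepsilon$-differential privacy (with respect to its output tree, which contains no counts).
   Context: $\mathrm{Lap}(\lambda)$ is the Laplace distribution with density $\frac{1}{2\lambda}e^{-|y|/\lambda}$. Setting: $\Omega$ is a domain and there is a fixed, data-independent hierarchical splitting scheme of fanout $\beta\ge 2$: an infinite rooted tree of candidate nodes in which every node $v$ has exactly $\beta$ children, each node $v$ carries a sub-domain $\mathrm{dom}(v)\subseteq\Omega$, the root $v_1$ has $\mathrm{dom}(v_1)=\Omega$, and the sub-domains of the $\beta$ children of $v$ partition $\mathrm{dom}(v)$. $\mathrm{depth}(v)$ is the hop distance from $v$ to the root. A dataset $D$ is a finite multiset of points of $\Omega$; $c(v)$ is the number of points of $D$ lying in $\mathrm{dom}(v)$. PrivTree$(D,\lambda,\theta,\delta)$ (with $\lambda>0$, $\theta\in\mathbb{R}$, $\delta>0$): start with the tree consisting only of the root, marked unvisited. While some node $v$ is unvisited: mark $v$ visited; set $b(v)=\max\{\theta-\delta,\ c(v)-\mathrm{depth}(v)\cdot\delta\}$; set $\hat b(v)=b(v)+\eta_v$ where $\eta_v\sim\mathrm{Lap}(\lambda)$ is drawn freshly and independently; if $\hat b(v)>\theta$, add all $\beta$ children of $v$ to the tree as unvisited nodes. The output is the resulting tree (its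 set of nodes with their sub-domains), with all counts $c,b,\hat b$ removed. Two datasets are neighboring if one is obtained from the other by inserting one point. An algorithm $\mathcal{A}$ is $\varepsilon$-differentially private if for all neighboring $D,D'$ and every possible output $O$, $\ln\big(\Pr[\mathcal{A}(D)=O]/\Pr[\mathcal{A}(D')=O]\big)\le\varepsilon$. *)

theory Defs
  imports "HOL-Probability.Probability" "HOL-Library.Multiset"
begin

text \<open>Candidate nodes of the infinite beta-ary tree are lists of child indices
  (the root is the empty list; the i-th child of v is v @ [i], i < beta).
  depth v = length v.\<close>

definition splitting_scheme :: "'a set \<Rightarrow> nat \<Rightarrow> (nat list \<Rightarrow> 'a set) \<Rightarrow> bool" where
  "splitting_scheme \<Omega> \<beta> sdom \<longleftrightarrow> 2 \<le> \<beta> \<and> sdom [] = \<Omega> \<and>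
     (\<forall>v. set v \<subseteq> {..<\<beta>} \<longrightarrow>
        (\<Union>i<\<beta>. sdom (v @ [i])) = sdom v \<and> disjoint_family_on (\<lambda>i. sdom (v @ [i])) {..<\<beta>})"

definition laplace :: "real \<Rightarrow> real measure" where
  "laplace l = density lborel (\<lambda>y. ennreal (exp (- \<bar>y\<bar> / l) / (2 * l)))"

definition noise_space :: "real \<Rightarrow> (nat list \<Rightarrow> real) measure" where
  "noise_space l = PiM UNIV (\<lambda>_. laplace l)"

definition node_count :: "(nat list \<Rightarrow> 'a set) \<Rightarrow> 'a multiset \<Rightarrow> nat list \<Rightarrow> nat" where
  "node_count sdom D v = size (filter_mset (\<lambda>p. p \<in> sdom v) D)"

definition biased_count ::
  "(nat list \<Rightarrow> 'a set) \<Rightarrow> 'a multiset \<Rightarrow> real \<Rightarrow> real \<Rightarrow> nat list \<Rightarrow> real" where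
  "biased_count sdom D \<theta> \<delta> v = max (\<theta> - \<delta>) (real (node_count sdom D v) - real (length v) * \<delta>)"

definition privtree_output ::
  "nat \<Rightarrow> (nat list \<Rightarrow> 'a set) \<Rightarrow> 'a multiset \<Rightarrow> real \<Rightarrow> real \<Rightarrow> (nat list \<Rightarrow> real) \<Rightarrow> nat list set" where
  "privtree_output \<beta> sdom D \<theta> \<delta> \<eta> =
     {v. set v \<subseteq> {..<\<beta>} \<and>
         (\<forall>k<length v. biased_count sdom D \<theta> \<delta> (take k v) + \<eta> (take k v) > \<theta>)}"

definition privtree_prob ::
  "nat \<Rightarrow> (nat list \<Rightarrow> 'a set) \<Rightarrow> 'a multiset \<Rightarrow> real \<Rightarrow> real \<Rightarrow> real \<Rightarrow> nat list set \<Rightarrow> real" where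
  "privtree_prob \<beta> sdom D l \<theta> \<delta> T =
     measure (noise_space l) {\<eta> \<in> space (noise_space l). privtree_output \<beta> sdom D \<theta> \<delta> \<eta> = T}"

end

theory Submission
  imports Defs "HOL-Library.Sublist"
begin

text \<open>The event that the output agrees with a tree T up to depth n is a cylinder event
  whose probability is a product, over the nodes u of T above depth n, of the probability
  that the noisy test at u has the outcome prescribed by T; these events decrease to the
  event that the output is T as n grows.

  Inserting a point x lowers the test threshold \<open>\<theta> - b(u)\<close> by at most 1, and only at
  the nodes whose domain contains x. These nodes form a chain along which the values
  \<open>depth(u) \<delta> - c(u)\<close> are \<open>\<delta>\<close>-separated. The ratio of two Laplace tails is at most the
  exponential of an increment of a potential whose derivative dominates the hazard rate;
  averaging over a shift in [0, 1], the increments along the chain sum to at most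
  \<open>(2 + 1/(e\<^sup>\<gamma> - 1))/\<lambda> = (2e\<^sup>\<gamma> - 1)/((e\<^sup>\<gamma> - 1)\<lambda>)\<close>. Conversely, only a node
  where T stops splitting costs a factor, at most \<open>exp(1/\<lambda>)\<close>, and the chain contains
  at most one such node.\<close>

section \<open>Laplace tails\<close>

lemma sets_laplace [simp]: "sets (laplace l) = sets borel"
  by (simp add: laplace_def)

lemma space_laplace [simp]: "space (laplace l) = UNIV"
  by (simp add: laplace_def)

lemma emeasure_laplace_singleton: "emeasure (laplace l) {a} = 0"
  unfolding laplace_def
  by (subst emeasure_density) (auto intro!: nn_integral_null_set[where M=lborel, simplified])

lemma emeasure_laplace_greaterThan: "emeasure (laplace l) {a<..} = emeasure (laplace l) {a..}"
proof -
  have "{a..} = {a} \<union> {a<..}" by auto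
  then have "emeasure (laplace l) {a..} = emeasure (laplace l) {a} + emeasure (laplace l) {a<..}"
    by (simp add: plus_emeasure)
  then show ?thesis by (simp add: emeasure_laplace_singleton)
qed

lemma tendsto_exp_neg_divide_at_top:
  fixes l :: real
  assumes "0 < l"
  shows "((\<lambda>x. exp (- x / l)) \<longlongrightarrow> 0) at_top"
proof -
  have "LIM x at_top. (1 / l) * x :> at_top"
    using filterlim_tendsto_pos_mult_at_top[OF tendsto_const _ filterlim_ident, of "1 / l"] assms
    by simp
  then have "LIM x at_top. - ((1 / l) * x) :> at_bot"
    by (simp add: filterlim_uminus_at_top[symmetric])
  from filterlim_compose[OF exp_at_bot this] show ?thesis by simp
qed

definition laplace_tail :: "real \<Rightarrow> real \<Rightarrow> real" where
  "laplace_tail l a = (if 0 \<le> a then exp (- a / l) / 2 else 1 - exp (a / l) / 2)"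

lemma emeasure_laplace_atLeast_nonneg:
  assumes l: "0 < l" and a: "0 \<le> a"
  shows "emeasure (laplace l) {a..} = ennreal (exp (- a / l) / 2)"
proof -
  have "emeasure (laplace l) {a..} =
      (\<integral>\<^sup>+x. ennreal (exp (- \<bar>x\<bar> / l) / (2 * l)) * indicator {a..} x \<partial>lborel)"
    unfolding laplace_def by (subst emeasure_density) (auto simp: mult.commute)
  also have "\<dots> = 0 - (- exp (- a / l) / 2)"
  proof (rule nn_integral_FTC_atLeast)
    fix x assume "a \<le> x"
    then have "\<bar>x\<bar> = x" using a by simp
    then show "DERIV (\<lambda>x. - exp (- x / l) / 2) x :> exp (- \<bar>x\<bar> / l) / (2 * l)"
      using l by (auto intro!: derivative_eq_intros simp: field_simps)
  next
    have "((\<lambda>x. - (exp (- x / l) / 2)) \<longlongrightarrow> - (0 / 2)) at_top"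
      by (intro tendsto_minus tendsto_divide tendsto_exp_neg_divide_at_top l tendsto_const) simp
    then show "((\<lambda>x. - exp (- x / l) / 2) \<longlongrightarrow> 0) at_top" by simp
  qed (use l in auto)
  finally show ?thesis by simp
qed

lemma emeasure_laplace_Icc_nonpos:
  assumes l: "0 < l" and a: "a \<le> 0"
  shows "emeasure (laplace l) {a..0} = ennreal ((1 - exp (a / l)) / 2)"
proof -
  have "emeasure (laplace l) {a..0} =
      (\<integral>\<^sup>+x. ennreal (exp (- \<bar>x\<bar> / l) / (2 * l)) * indicator {a..0} x \<partial>lborel)"
    unfolding laplace_def by (subst emeasure_density) (auto simp: mult.commute)
  also have "\<dots> = exp (0 / l) / 2 - exp (a / l) / 2"
  proof (rule nn_integral_FTC_Icc)
    fix x assume "x \<in> {a..0}"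
    then have "\<bar>x\<bar> = - x" by simp
    then show "DERIV (\<lambda>x. exp (x / l) / 2) x :> exp (- \<bar>x\<bar> / l) / (2 * l)"
      using l by (auto intro!: derivative_eq_intros simp: field_simps)
  qed (use a l in auto)
  finally show ?thesis by (simp add: diff_divide_distrib)
qed

lemma emeasure_laplace_atLeast:
  assumes l: "0 < l"
  shows "emeasure (laplace l) {a..} = ennreal (laplace_tail l a)"
proof (cases "0 \<le> a")
  case True
  then show ?thesis using emeasure_laplace_atLeast_nonneg[OF l] by (simp add: laplace_tail_def)
next
  case False
  have "{a..} = {a..0} \<union> {0<..}" using False by auto
  then have "emeasure (laplace l) {a..} = emeasure (laplace l) {a..0} + emeasure (laplace l) {0<..}"
    by (subst plus_emeasure) auto
  also have "\<dots> = ennreal ((1 - exp (a / l)) / 2) + ennreal (1 / 2)"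
    using False emeasure_laplace_Icc_nonpos[OF l] emeasure_laplace_atLeast_nonneg[OF l, of 0]
    by (simp add: emeasure_laplace_greaterThan)
  also have "\<dots> = ennreal (laplace_tail l a)"
    using False l by (subst ennreal_plus[symmetric]) (auto simp: laplace_tail_def field_simps)
  finally show ?thesis .
qed

lemma laplace_tail_bounds:
  assumes "0 < l"
  shows "0 < laplace_tail l a" "laplace_tail l a < 1"
proof -
  have "exp (- \<bar>a\<bar> / l) \<le> 1"
    using assms by simp
  then have "exp (- \<bar>a\<bar> / l) < 2"
    by linarith
  then show "0 < laplace_tail l a" "laplace_tail l a < 1"
    by (auto simp: laplace_tail_def abs_if split: if_splits)
qed

lemma prob_space_laplace:
  assumes l: "0 < l"
  shows "prob_space (laplace l)"
proof
  let ?A = "\<lambda>n::nat. {- real n..}"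
  have "(\<Union>n. ?A n) = UNIV"
    by (auto simp: minus_le_iff) (meson real_arch_simple)
  moreover have "(\<lambda>n. emeasure (laplace l) (?A n)) \<longlonglongrightarrow> emeasure (laplace l) (\<Union>n. ?A n)"
    by (intro Lim_emeasure_incseq) (auto simp: incseq_def)
  moreover have "(\<lambda>n. emeasure (laplace l) (?A n)) \<longlonglongrightarrow> 1"
  proof -
    have "emeasure (laplace l) (?A n) = ennreal (1 - exp (- real n / l) / 2)" for n
      using emeasure_laplace_atLeast[OF l] by (cases "n = 0") (auto simp: laplace_tail_def)
    moreover have "(\<lambda>n. exp (- real n / l)) \<longlonglongrightarrow> 0"
      using filterlim_compose[OF tendsto_exp_neg_divide_at_top[OF l] filterlim_real_sequentially]
      by simp
    then have "(\<lambda>n. ennreal (1 - exp (- real n / l) / 2)) \<longlonglongrightarrow> ennreal (1 - 0 / 2)"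
      by (intro tendsto_intros) auto
    ultimately show ?thesis by simp
  qed
  ultimately show "emeasure (laplace l) (space (laplace l)) = 1"
    using LIMSEQ_unique by fastforce
qed

lemma measure_laplace_greaterThan:
  assumes "0 < l"
  shows "measure (laplace l) {a<..} = laplace_tail l a"
  using emeasure_laplace_atLeast[OF assms, of a] laplace_tail_bounds[OF assms, of a]
  by (simp add: measure_def emeasure_laplace_greaterThan)

lemma measure_laplace_atMost:
  assumes "0 < l"
  shows "measure (laplace l) {..a} = 1 - laplace_tail l a"
proof -
  interpret prob_space "laplace l" by (rule prob_space_laplace[OF assms])
  have "{..a} = space (laplace l) - {a<..}" by auto
  then show ?thesis
    using prob_compl[of "{a<..}"] measure_laplace_greaterThan[OF assms] by simp
qed

text \<open>The derivative of the potential, \<open>exp(t/l)/l\<close> for \<open>t < 0\<close> and \<open>1/l\<close> for \<open>t > 0\<close>,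
  dominates the hazard rate of \<open>Lap(l)\<close>.\<close>

definition tail_potential :: "real \<Rightarrow> real \<Rightarrow> real" where
  "tail_potential l t = exp (min t 0 / l) - 1 + max t 0 / l"

lemma tail_potential_nonneg: "0 \<le> t \<Longrightarrow> tail_potential l t = t / l"
  by (simp add: tail_potential_def)

lemma tail_potential_nonpos: "t \<le> 0 \<Longrightarrow> tail_potential l t = exp (t / l) - 1"
  by (simp add: tail_potential_def)

lemma tail_potential_mono:
  assumes l: "0 < l" and "y \<le> z"
  shows "tail_potential l y \<le> tail_potential l z"
proof -
  have "min y 0 / l \<le> min z 0 / l" "max y 0 / l \<le> max z 0 / l"
    using assms by (simp_all add: divide_right_mono)
  then show ?thesis
    by (simp add: tail_potential_def add_mono)
qed

lemma tail_potential_diff_le: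
  assumes l: "0 < l" and yz: "y \<le> z"
  shows "tail_potential l z - tail_potential l y \<le> (z - y) / l"
proof -
  have exp_diff_le: "exp (b / l) - exp (a / l) \<le> (b - a) / l" if "a \<le> b" "b \<le> 0" for a b
  proof -
    have "exp (b / l) - exp (a / l) = exp (b / l) * (1 - exp (- ((b - a) / l)))"
      by (simp add: right_diff_distrib diff_divide_distrib exp_diff)
    also have "\<dots> \<le> 1 * ((b - a) / l)"
      using that l exp_ge_add_one_self[of "- ((b - a) / l)"]
      by (intro mult_mono) (auto simp: divide_nonpos_pos)
    finally show ?thesis by simp
  qed
  consider "0 \<le> y" | "y < 0" "0 \<le> z" | "z < 0"
    using yz by linarith
  then show ?thesis
  proof cases
    case 1
    then show ?thesis using yz by (simp add: tail_potential_nonneg diff_divide_distrib)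
  next
    case 2
    then show ?thesis
      using exp_diff_le[of y 0] by (simp add: tail_potential_nonneg tail_potential_nonpos diff_divide_distrib)
  next
    case 3
    then show ?thesis
      using exp_diff_le[OF yz] yz by (simp add: tail_potential_nonpos)
  qed
qed

lemma laplace_tail_antimono:
  assumes l: "0 < l" and "y \<le> z"
  shows "laplace_tail l z \<le> laplace_tail l y"
proof -
  have "exp (- (z / l)) \<le> 1" if "0 \<le> z"
    using that l by simp
  moreover have "exp (y / l) \<le> 1" if "y < 0"
    using that l by (simp add: divide_nonpos_pos)
  ultimately have "exp (- (z / l)) + exp (y / l) \<le> 2" if "y < 0" "0 \<le> z"
    using that by (smt (verit))
  with assms show ?thesis
    by (auto simp: laplace_tail_def divide_right_mono)
qed

lemma laplace_tail_uminus: "laplace_tail l (- t) = 1 - laplace_tail l t"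
  by (cases "t = 0") (auto simp: laplace_tail_def)

lemma laplace_tail_le_exp_potential:
  assumes l: "0 < l" and yz: "y \<le> z"
  shows "laplace_tail l y \<le> exp (tail_potential l z - tail_potential l y) * laplace_tail l z"
proof -
  consider "0 \<le> y" | "y < 0" "0 \<le> z" | "z < 0"
    using yz by linarith
  then show ?thesis
  proof cases
    case 1
    then have "exp (tail_potential l z - tail_potential l y) * laplace_tail l z
        = exp ((z - y) / l) * exp (- z / l) / 2"
      using yz by (simp add: tail_potential_nonneg laplace_tail_def diff_divide_distrib)
    also have "\<dots> = laplace_tail l y"
      using 1 by (simp add: laplace_tail_def exp_add[symmetric] diff_divide_distrib)
    finally show ?thesis by simp
  next
    case 2
    define A where "A = exp (y / l)"
    have "exp (tail_potential l z - tail_potential l y) * laplace_tail l z = exp (1 - A) / 2"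
      using 2 by (simp add: tail_potential_nonneg tail_potential_nonpos laplace_tail_def A_def
          exp_diff exp_minus exp_add field_simps)
    moreover have "2 - A \<le> exp (1 - A)"
      using exp_ge_add_one_self[of "1 - A"] by simp
    ultimately show ?thesis
      using 2 by (simp add: laplace_tail_def A_def)
  next
    case 3
    define A B where "A = exp (y / l)" and "B = exp (z / l)"
    have AB: "A \<le> B" "B \<le> 1"
      using yz l 3 by (auto simp: A_def B_def divide_right_mono divide_nonpos_pos)
    have "1 - A / 2 \<le> (1 + (B - A)) * (1 - B / 2)"
    proof -
      have "(1 + (B - A)) * (1 - B / 2) - (1 - A / 2) = (B - A) * (1 - B) / 2"
        by (simp add: field_simps)
      moreover have "0 \<le> (B - A) * (1 - B) / 2"
        using AB by simp
      ultimately show ?thesis by linarith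
    qed
    also have "\<dots> \<le> exp (B - A) * (1 - B / 2)"
      using AB by (intro mult_right_mono exp_ge_add_one_self) auto
    also have "\<dots> = exp (tail_potential l z - tail_potential l y) * laplace_tail l z"
      using 3 yz by (simp add: tail_potential_nonpos laplace_tail_def A_def B_def)
    finally show ?thesis
      using 3 yz by (simp add: laplace_tail_def A_def)
  qed
qed

section \<open>Sums over separated points\<close>

definition separated :: "real \<Rightarrow> 'u set \<Rightarrow> ('u \<Rightarrow> real) \<Rightarrow> bool" where
  "separated d U p \<longleftrightarrow> (\<forall>u\<in>U. \<forall>v\<in>U. u \<noteq> v \<longrightarrow> d \<le> \<bar>p u - p v\<bar>)"

lemma separated_subset: "separated d U p \<Longrightarrow> V \<subseteq> U \<Longrightarrow> separated d V p"
  unfolding separated_def by blast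

lemma separated_maximum:
  assumes "finite U" "U \<noteq> {}" "separated d U p"
  obtains u0 where "u0 \<in> U" "\<And>u. u \<in> U - {u0} \<Longrightarrow> p u \<le> p u0 - d"
proof -
  have "Max (p ` U) \<in> p ` U"
    using assms(1,2) by (intro Max_in) auto
  then obtain u0 where u0: "u0 \<in> U" "p u0 = Max (p ` U)"
    by auto
  have "p u \<le> p u0" if "u \<in> U" for u
    using that assms(1) u0(2) by simp
  then have "p u \<le> p u0 - d" if "u \<in> U - {u0}" for u
    using that u0(1) assms(3) unfolding separated_def by fastforce
  with u0(1) show ?thesis by (rule that)
qed

lemma sum_exp_separated_le:
  fixes l d :: real
  assumes l: "0 < l" and d: "0 < d"
  shows "finite V \<Longrightarrow> separated d V p \<Longrightarrow> (\<And>u. u \<in> V \<Longrightarrow> p u \<le> m) \<Longrightarrow>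
    (\<Sum>u\<in>V. exp (p u / l)) \<le> exp (m / l) / (1 - exp (- d / l))"
proof (induction "card V" arbitrary: V m rule: less_induct)
  case less
  have q: "0 < 1 - exp (- d / l)"
    using l d by simp
  show ?case
  proof (cases "V = {}")
    case True
    then show ?thesis using q by simp
  next
    case False
    obtain u0 where u0: "u0 \<in> V" "\<And>u. u \<in> V - {u0} \<Longrightarrow> p u \<le> p u0 - d"
      using separated_maximum[OF less.prems(1) False less.prems(2)] by blast
    have "card (V - {u0}) < card V"
      using u0(1) less.prems(1) by (rule card_Diff1_less[rotated])
    then have IH: "(\<Sum>u\<in>V - {u0}. exp (p u / l)) \<le> exp ((p u0 - d) / l) / (1 - exp (- d / l))"
      using less.hyps less.prems(1,2) separated_subset u0(2) by (metis Diff_subset finite_Diff)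
    have "(\<Sum>u\<in>V. exp (p u / l)) = exp (p u0 / l) + (\<Sum>u\<in>V - {u0}. exp (p u / l))"
      using u0(1) less.prems(1) by (simp add: sum.remove)
    also have "\<dots> \<le> exp (p u0 / l) + exp (p u0 / l) * exp (- d / l) / (1 - exp (- d / l))"
      using IH by (simp add: diff_divide_distrib exp_add[symmetric])
    also have "\<dots> = exp (p u0 / l) / (1 - exp (- d / l))"
    proof -
      have "A + A * q / (1 - q) = A / (1 - q)" if "q < 1" for A q :: real
        using that by (simp add: field_simps)
      then show ?thesis using l d by simp
    qed
    also have "\<dots> \<le> exp (m / l) / (1 - exp (- d / l))"
      using q less.prems(3)[OF u0(1)] l by (simp add: divide_right_mono)
    finally show ?thesis .
  qed
qed

definition potential_kernel :: "real \<Rightarrow> real \<Rightarrow> real \<Rightarrow> real" where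
  "potential_kernel l d t = (if t < 0 then exp (t / l) / l else if t \<le> d then 1 / l else 0)"

lemma has_real_derivative_capped_potential:
  assumes l: "0 < l" and d: "0 < d" and t: "t \<noteq> 0" "t \<noteq> d"
  shows "((\<lambda>t. tail_potential l (min d t)) has_real_derivative potential_kernel l d t) (at t)"
proof -
  consider "t < 0" | "0 < t" "t < d" | "d < t"
    using t by linarith
  then show ?thesis
  proof cases
    case 1
    have "((\<lambda>t. exp (t / l) - 1) has_real_derivative potential_kernel l d t) (at t)"
      using 1 l by (auto intro!: derivative_eq_intros simp: potential_kernel_def)
    then show ?thesis
      by (rule has_field_derivative_transform_within_open[where S = "{..<0}"])
        (use 1 d in \<open>auto simp: tail_potential_nonpos\<close>)
  next
    case 2
    have "((\<lambda>t. t / l) has_real_derivative potential_kernel l d t) (at t)"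
      using 2 l by (auto intro!: derivative_eq_intros simp: potential_kernel_def)
    then show ?thesis
      by (rule has_field_derivative_transform_within_open[where S = "{0<..<d}"])
        (use 2 in \<open>auto simp: tail_potential_nonneg\<close>)
  next
    case 3
    have "((\<lambda>t. d / l) has_real_derivative potential_kernel l d t) (at t)"
      using 3 d by (auto intro!: derivative_eq_intros simp: potential_kernel_def)
    then show ?thesis
      by (rule has_field_derivative_transform_within_open[where S = "{d<..}"])
        (use 3 d in \<open>auto simp: tail_potential_nonneg\<close>)
  qed
qed

lemma has_integral_potential_kernel:
  assumes l: "0 < l" and d: "0 < d"
  shows "((\<lambda>\<tau>. potential_kernel l d (w - \<tau>)) has_integral
      tail_potential l (min d w) - tail_potential l (min d (w - 1))) {0..1}"
proof -
  define f where "f = (\<lambda>\<tau>. - tail_potential l (min d (w - \<tau>)))"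
  have "((\<lambda>\<tau>. potential_kernel l d (w - \<tau>)) has_integral f 1 - f 0) {0..1}"
  proof (rule fundamental_theorem_of_calculus_interior_strong[where S = "{w, w - d}"])
    show "continuous_on {0..1} f"
      unfolding f_def tail_potential_def by (intro continuous_intros) (use l in auto)
  next
    fix x assume "x \<in> {0<..<1} - {w, w - d}"
    then have x: "w - x \<noteq> 0" "w - x \<noteq> d" by auto
    have "((\<lambda>\<tau>. w - \<tau>) has_real_derivative - 1) (at x)"
      by (auto intro!: derivative_eq_intros)
    from DERIV_minus[OF DERIV_chain2[OF has_real_derivative_capped_potential[OF l d x] this]]
    show "(f has_vector_derivative potential_kernel l d (w - x)) (at x)"
      by (simp add: f_def has_real_derivative_iff_has_vector_derivative)
  qed auto
  then show ?thesis by (simp add: f_def)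
qed

lemma potential_kernel_le:
  assumes "0 < l"
  shows "potential_kernel l d t \<le> 1 / l"
proof -
  have "exp (t / l) \<le> 1" if "t < 0"
    using that assms by (simp add: divide_neg_pos less_imp_le)
  then show ?thesis
    using assms by (auto simp: potential_kernel_def divide_right_mono)
qed

lemma potential_kernel_le_exp:
  assumes "0 < l" "t \<le> 0"
  shows "potential_kernel l d t \<le> exp (t / l) / l"
  using assms by (auto simp: potential_kernel_def)

text \<open>The largest point not exceeding d contributes at most \<open>1/l\<close>; the others lie below 0,
  at mutual distance at least d, and are bounded by a geometric series.\<close>

lemma sum_potential_kernel_separated_le:
  assumes l: "0 < l" and d: "0 < d" and U: "finite U" and sep: "separated d U p"
  shows "(\<Sum>u\<in>U. potential_kernel l d (p u)) \<le> (2 + 1 / (exp (d / l) - 1)) / l"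
proof -
  define W where "W = {u \<in> U. p u \<le> d}"
  have W: "finite W" "W \<subseteq> U" "separated d W p"
    using U separated_subset[OF sep] by (auto simp: W_def)
  have "(\<Sum>u\<in>U. potential_kernel l d (p u)) = (\<Sum>u\<in>W. potential_kernel l d (p u))"
    using U d by (intro sum.mono_neutral_right) (auto simp: W_def potential_kernel_def)
  also have "\<dots> \<le> (2 + 1 / (exp (d / l) - 1)) / l"
  proof (cases "W = {}")
    case True
    then show ?thesis using l d by (simp add: add_pos_nonneg)
  next
    case False
    obtain u0 where u0: "u0 \<in> W" "\<And>u. u \<in> W - {u0} \<Longrightarrow> p u \<le> p u0 - d"
      using separated_maximum[OF W(1) False W(3)] by blast
    have below: "p u \<le> 0" if "u \<in> W - {u0}" for u
      using u0 that by (force simp: W_def)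
    have "(\<Sum>u\<in>W - {u0}. potential_kernel l d (p u)) \<le> (\<Sum>u\<in>W - {u0}. exp (p u / l)) / l"
      unfolding sum_divide_distrib using potential_kernel_le_exp[OF l below] by (rule sum_mono)
    also have "\<dots> \<le> exp (0 / l) / (1 - exp (- d / l)) / l"
      using W below l by (intro divide_right_mono sum_exp_separated_le l d) (auto intro: separated_subset)
    also have "exp (0 / l) / (1 - exp (- d / l)) = 1 + 1 / (exp (d / l) - 1)"
      using l d by (simp add: exp_minus field_simps)
    finally have rest: "(\<Sum>u\<in>W - {u0}. potential_kernel l d (p u)) \<le> (1 + 1 / (exp (d / l) - 1)) / l" .
    have "(\<Sum>u\<in>W. potential_kernel l d (p u))
        = potential_kernel l d (p u0) + (\<Sum>u\<in>W - {u0}. potential_kernel l d (p u))"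
      using W(1) u0(1) by (simp add: sum.remove)
    also have "\<dots> \<le> 1 / l + (1 + 1 / (exp (d / l) - 1)) / l"
      using potential_kernel_le[OF l] rest by (rule add_mono)
    finally show ?thesis by (simp add: add_divide_distrib)
  qed
  finally show ?thesis .
qed

text \<open>Each increment is the integral of the kernel over a unit shift, so the pointwise
  bound integrates to the same bound.\<close>

lemma sum_capped_potential_increments_le:
  assumes l: "0 < l" and d: "0 < d" and U: "finite U" and sep: "separated d U w"
  shows "(\<Sum>u\<in>U. tail_potential l (min d (w u)) - tail_potential l (min d (w u - 1)))
    \<le> (2 + 1 / (exp (d / l) - 1)) / l"
proof (rule has_integral_le)
  show "((\<lambda>\<tau>. \<Sum>u\<in>U. potential_kernel l d (w u - \<tau>)) has_integral
      (\<Sum>u\<in>U. tail_potential l (min d (w u)) - tail_potential l (min d (w u - 1)))) {0..1}"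
    using U by (intro has_integral_sum has_integral_potential_kernel l d)
  show "((\<lambda>\<tau>. (2 + 1 / (exp (d / l) - 1)) / l) has_integral (2 + 1 / (exp (d / l) - 1)) / l) {0..1::real}"
    using has_integral_const_real[of "(2 + 1 / (exp (d / l) - 1)) / l" 0 "1::real"] by simp
next
  fix \<tau> :: real
  have "separated d U (\<lambda>u. w u - \<tau>)"
    using sep by (simp add: separated_def)
  then show "(\<Sum>u\<in>U. potential_kernel l d (w u - \<tau>)) \<le> (2 + 1 / (exp (d / l) - 1)) / l"
    by (rule sum_potential_kernel_separated_le[OF l d U])
qed

section \<open>Splitting schemes and grown trees\<close>

lemma splitting_scheme_child_subset:
  assumes "splitting_scheme \<Omega> \<beta> sdom" "set v \<subseteq> {..<\<beta>}" "i < \<beta>"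
  shows "sdom (v @ [i]) \<subseteq> sdom v"
proof -
  have "(\<Union>i<\<beta>. sdom (v @ [i])) = sdom v"
    using assms(1,2) unfolding splitting_scheme_def by blast
  then show ?thesis using assms(3) by blast
qed

lemma splitting_scheme_append_subset:
  assumes ss: "splitting_scheme \<Omega> \<beta> sdom"
  shows "set (v @ w) \<subseteq> {..<\<beta>} \<Longrightarrow> sdom (v @ w) \<subseteq> sdom v"
proof (induction w rule: rev_induct)
  case (snoc i w)
  then have "sdom (v @ w @ [i]) \<subseteq> sdom (v @ w)"
    using splitting_scheme_child_subset[OF ss, of "v @ w" i] by simp
  then show ?case using snoc by auto
qed simp

lemma splitting_scheme_not_parallel:
  assumes ss: "splitting_scheme \<Omega> \<beta> sdom"
    and u: "set u \<subseteq> {..<\<beta>}" and v: "set v \<subseteq> {..<\<beta>}" and "x \<in> sdom u" "x \<in> sdom v"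
  shows "\<not> u \<parallel> v"
proof
  assume "u \<parallel> v"
  then obtain as b bs c cs where "b \<noteq> c" "u = as @ b # bs" "v = as @ c # cs"
    using parallel_decomp by blast
  then have bc: "b \<noteq> c" "u = (as @ [b]) @ bs" "v = (as @ [c]) @ cs"
    by simp_all
  have "x \<in> sdom (as @ [b])" "x \<in> sdom (as @ [c])"
    using splitting_scheme_append_subset[OF ss] assms(4,5) u v bc(2,3) by blast+
  moreover have "disjoint_family_on (\<lambda>i. sdom (as @ [i])) {..<\<beta>}" "b < \<beta>" "c < \<beta>"
    using ss u v bc unfolding splitting_scheme_def by auto
  ultimately show False
    using bc(1) unfolding disjoint_family_on_def by blast
qed

lemma node_count_mono: "sdom v \<subseteq> sdom u \<Longrightarrow> node_count sdom D v \<le> node_count sdom D u"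
  unfolding node_count_def by (intro size_mset_mono filter_mset_mono_strong) auto

definition grown_tree :: "nat \<Rightarrow> (nat list \<Rightarrow> real) \<Rightarrow> real \<Rightarrow> (nat list \<Rightarrow> real) \<Rightarrow> nat list set" where
  "grown_tree \<beta> score \<theta> \<eta> =
     {v. set v \<subseteq> {..<\<beta>} \<and> (\<forall>k<length v. \<theta> < score (take k v) + \<eta> (take k v))}"

lemma privtree_output_eq_grown_tree:
  "privtree_output \<beta> sdom D \<theta> \<delta> \<eta> = grown_tree \<beta> (biased_count sdom D \<theta> \<delta>) \<theta> \<eta>"
  by (simp add: privtree_output_def grown_tree_def)

lemma Nil_in_grown_tree: "[] \<in> grown_tree \<beta> score \<theta> \<eta>"
  by (simp add: grown_tree_def)

lemma snoc_in_grown_tree_iff: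
  assumes "set v \<subseteq> {..<\<beta>}" "i < \<beta>"
  shows "v @ [i] \<in> grown_tree \<beta> score \<theta> \<eta> \<longleftrightarrow>
    v \<in> grown_tree \<beta> score \<theta> \<eta> \<and> \<theta> < score v + \<eta> v"
proof -
  have "(\<forall>k<length (v @ [i]). \<theta> < score (take k (v @ [i])) + \<eta> (take k (v @ [i]))) \<longleftrightarrow>
      (\<forall>k<length v. \<theta> < score (take k v) + \<eta> (take k v)) \<and> \<theta> < score v + \<eta> v"
    by (auto simp: less_Suc_eq take_append)
  then show ?thesis
    using assms by (simp add: grown_tree_def)
qed

lemma butlast_in_grown_tree:
  assumes "v \<in> grown_tree \<beta> score \<theta> \<eta>"
  shows "butlast v \<in> grown_tree \<beta> score \<theta> \<eta>"
proof (cases v rule: rev_cases)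
  case (snoc u i)
  then show ?thesis
    using assms snoc_in_grown_tree_iff[of u \<beta> i] by (auto simp: grown_tree_def)
qed (use assms in simp)

section \<open>Outputs truncated at a finite depth\<close>

definition full_tree_upto :: "nat \<Rightarrow> nat list set \<Rightarrow> nat \<Rightarrow> bool" where
  "full_tree_upto \<beta> T n \<longleftrightarrow> [] \<in> T \<and> (\<forall>v\<in>T. length v \<le> n \<longrightarrow> butlast v \<in> T) \<and>
     (\<forall>u\<in>T. length u < n \<longrightarrow> (\<forall>i<\<beta>. u @ [i] \<in> T \<longleftrightarrow> u @ [0] \<in> T))"

lemma full_tree_upto_butlast:
  "full_tree_upto \<beta> T n \<Longrightarrow> v \<in> T \<Longrightarrow> length v \<le> n \<Longrightarrow> butlast v \<in> T"
  unfolding full_tree_upto_def by blast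

lemma full_tree_upto_snoc:
  "full_tree_upto \<beta> T n \<Longrightarrow> u \<in> T \<Longrightarrow> length u < n \<Longrightarrow> i < \<beta> \<Longrightarrow> u @ [i] \<in> T \<longleftrightarrow> u @ [0] \<in> T"
  unfolding full_tree_upto_def by blast

lemma full_tree_upto_take:
  assumes T: "full_tree_upto \<beta> T n" and v: "v \<in> T" "length v \<le> n"
  shows "take k v \<in> T"
proof (induction "length v - k" arbitrary: k)
  case 0
  then show ?case using v by simp
next
  case (Suc m)
  then have k: "k < length v" by simp
  then have "take (Suc k) v \<in> T" "butlast (take (Suc k) v) = take k v"
    using Suc(1)[of "Suc k"] Suc(2) by (simp_all add: take_Suc_conv_app_nth)
  moreover have "length (take (Suc k) v) \<le> n"
    using v by simp
  ultimately show ?case using full_tree_upto_butlast[OF T] by metis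
qed

definition agrees_upto ::
  "nat \<Rightarrow> (nat list \<Rightarrow> real) \<Rightarrow> real \<Rightarrow> nat list set \<Rightarrow> nat \<Rightarrow> (nat list \<Rightarrow> real) set" where
  "agrees_upto \<beta> score \<theta> T n =
     {\<eta>. \<forall>v. set v \<subseteq> {..<\<beta>} \<and> length v \<le> n \<longrightarrow> (v \<in> grown_tree \<beta> score \<theta> \<eta> \<longleftrightarrow> v \<in> T)}"

lemma agrees_upto_decseq: "decseq (agrees_upto \<beta> score \<theta> T)"
  by (auto simp: decseq_def agrees_upto_def)

lemma snoc_in_tree_iff_if_agrees_upto:
  assumes T: "T \<subseteq> {v. set v \<subseteq> {..<\<beta>}}" and \<eta>: "\<eta> \<in> agrees_upto \<beta> score \<theta> T n"
    and u: "u \<in> T" "length u < n" and i: "i < \<beta>"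
  shows "u @ [i] \<in> T \<longleftrightarrow> \<theta> < score u + \<eta> u"
proof -
  let ?G = "grown_tree \<beta> score \<theta> \<eta>"
  have agree: "v \<in> ?G \<longleftrightarrow> v \<in> T" if "set v \<subseteq> {..<\<beta>}" "length v \<le> n" for v
    using \<eta> that by (simp add: agrees_upto_def)
  have "set u \<subseteq> {..<\<beta>}"
    using u T by auto
  then have "u \<in> ?G" "u @ [i] \<in> T \<longleftrightarrow> u @ [i] \<in> ?G"
    using agree u i by auto
  then show ?thesis
    using snoc_in_grown_tree_iff[OF \<open>set u \<subseteq> _\<close> i] by blast
qed

lemma full_tree_upto_if_agrees_upto:
  assumes T: "T \<subseteq> {v. set v \<subseteq> {..<\<beta>}}" and \<beta>: "0 < \<beta>"
    and \<eta>: "\<eta> \<in> agrees_upto \<beta> score \<theta> T n"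
  shows "full_tree_upto \<beta> T n"
proof -
  let ?G = "grown_tree \<beta> score \<theta> \<eta>"
  have agree: "v \<in> ?G \<longleftrightarrow> v \<in> T" if "set v \<subseteq> {..<\<beta>}" "length v \<le> n" for v
    using \<eta> that by (simp add: agrees_upto_def)
  have "[] \<in> T"
    using agree[of "[]"] Nil_in_grown_tree by simp
  moreover have "butlast v \<in> T" if "v \<in> T" "length v \<le> n" for v
  proof -
    have "set v \<subseteq> {..<\<beta>}" "set (butlast v) \<subseteq> {..<\<beta>}"
      using that T by (auto dest: in_set_butlastD)
    then show ?thesis
      using that agree[of v] agree[of "butlast v"] butlast_in_grown_tree by auto
  qed
  moreover have "u @ [i] \<in> T \<longleftrightarrow> u @ [0] \<in> T" if "u \<in> T" "length u < n" "i < \<beta>" for u i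
    using snoc_in_tree_iff_if_agrees_upto[OF T \<eta> that(1,2)] that(3) \<beta> by blast
  ultimately show ?thesis
    unfolding full_tree_upto_def by blast
qed

lemma agrees_upto_if_full_tree_upto:
  assumes full: "full_tree_upto \<beta> T n"
    and tests: "\<And>u. u \<in> T \<Longrightarrow> length u < n \<Longrightarrow> \<theta> < score u + \<eta> u \<longleftrightarrow> u @ [0] \<in> T"
  shows "\<eta> \<in> agrees_upto \<beta> score \<theta> T n"
proof -
  let ?G = "grown_tree \<beta> score \<theta> \<eta>"
  have "set v \<subseteq> {..<\<beta>} \<and> length v \<le> n \<longrightarrow> (v \<in> ?G \<longleftrightarrow> v \<in> T)" for v
  proof (induction v rule: rev_induct)
    case Nil
    then show ?case using full Nil_in_grown_tree by (simp add: full_tree_upto_def)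
  next
    case (snoc i v)
    show ?case
    proof
      assume vi: "set (v @ [i]) \<subseteq> {..<\<beta>} \<and> length (v @ [i]) \<le> n"
      then have v: "set v \<subseteq> {..<\<beta>}" "i < \<beta>" "length v < n" by auto
      have "v @ [i] \<in> ?G \<longleftrightarrow> v \<in> T \<and> \<theta> < score v + \<eta> v"
        using snoc_in_grown_tree_iff[OF v(1,2)] snoc.IH v by simp
      also have "\<dots> \<longleftrightarrow> v @ [i] \<in> T"
      proof (cases "v \<in> T")
        case True
        then show ?thesis
          using tests[OF True v(3)] full_tree_upto_snoc[OF full True v(3) v(2)] by simp
      next
        case False
        then show ?thesis
          using full_tree_upto_butlast[OF full, of "v @ [i]"] vi by auto
      qed
      finally show "v @ [i] \<in> ?G \<longleftrightarrow> v @ [i] \<in> T" .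
    qed
  qed
  then show ?thesis by (simp add: agrees_upto_def)
qed

lemma agrees_upto_eq:
  assumes T: "T \<subseteq> {v. set v \<subseteq> {..<\<beta>}}" and \<beta>: "0 < \<beta>"
  shows "agrees_upto \<beta> score \<theta> T n =
    (if full_tree_upto \<beta> T n
     then {\<eta>. \<forall>u\<in>{u \<in> T. length u < n}. \<theta> < score u + \<eta> u \<longleftrightarrow> u @ [0] \<in> T} else {})"
proof (cases "full_tree_upto \<beta> T n")
  case True
  have "\<eta> \<in> agrees_upto \<beta> score \<theta> T n \<longleftrightarrow>
      (\<forall>u\<in>{u \<in> T. length u < n}. \<theta> < score u + \<eta> u \<longleftrightarrow> u @ [0] \<in> T)" for \<eta>
  proof
    assume "\<eta> \<in> agrees_upto \<beta> score \<theta> T n"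
    from snoc_in_tree_iff_if_agrees_upto[OF T this _ _ \<beta>]
    show "\<forall>u\<in>{u \<in> T. length u < n}. \<theta> < score u + \<eta> u \<longleftrightarrow> u @ [0] \<in> T"
      by blast
  qed (use agrees_upto_if_full_tree_upto[OF True] in blast)
  with True show ?thesis by (simp add: set_eq_iff)
next
  case False
  have "\<eta> \<notin> agrees_upto \<beta> score \<theta> T n" for \<eta>
    using False full_tree_upto_if_agrees_upto[OF T \<beta>, of \<eta> score \<theta> n] by blast
  with False show ?thesis by auto
qed

lemma prob_space_noise_space: "0 < l \<Longrightarrow> prob_space (noise_space l)"
  unfolding noise_space_def by (intro prob_space_PiM prob_space_laplace)

lemma space_noise_space [simp]: "space (noise_space l) = UNIV"
  by (simp add: noise_space_def space_PiM PiE_UNIV_domain)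

lemma noise_space_cylinder:
  assumes l: "0 < l" and Q: "finite Q" and A: "\<And>u. u \<in> Q \<Longrightarrow> A u \<in> sets borel"
  shows "{\<eta>. \<forall>u\<in>Q. \<eta> u \<in> A u} \<in> sets (noise_space l)"
    and "measure (noise_space l) {\<eta>. \<forall>u\<in>Q. \<eta> u \<in> A u} = (\<Prod>u\<in>Q. measure (laplace l) (A u))"
proof -
  interpret laplace: prob_space "laplace l"
    by (rule prob_space_laplace[OF l])
  have cyl: "{\<eta>. \<forall>u\<in>Q. \<eta> u \<in> A u} = prod_emb UNIV (\<lambda>_. laplace l) Q (Pi\<^sub>E Q A)"
    by (auto simp: prod_emb_def PiE_def extensional_def Pi_def)
  show "{\<eta>. \<forall>u\<in>Q. \<eta> u \<in> A u} \<in> sets (noise_space l)"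
    unfolding cyl noise_space_def using Q A by (intro sets_PiM_I) auto
  have "emeasure (noise_space l) {\<eta>. \<forall>u\<in>Q. \<eta> u \<in> A u} = (\<Prod>u\<in>Q. emeasure (laplace l) (A u))"
    unfolding cyl noise_space_def using Q A by (intro emeasure_PiM_emb prob_space_laplace l) auto
  also have "\<dots> = ennreal (\<Prod>u\<in>Q. measure (laplace l) (A u))"
    by (simp add: laplace.emeasure_eq_measure prod_ennreal)
  finally show "measure (noise_space l) {\<eta>. \<forall>u\<in>Q. \<eta> u \<in> A u} = (\<Prod>u\<in>Q. measure (laplace l) (A u))"
    by (simp add: measure_def prod_nonneg)
qed

text \<open>The probability that the test \<open>\<eta> u > t\<close> at node u agrees with T, in which u is
  split iff \<open>u @ [0] \<in> T\<close>.\<close>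

definition decision_prob :: "real \<Rightarrow> nat list set \<Rightarrow> nat list \<Rightarrow> real \<Rightarrow> real" where
  "decision_prob l T u t = (if u @ [0] \<in> T then laplace_tail l t else 1 - laplace_tail l t)"

lemma decision_prob_pos: "0 < l \<Longrightarrow> 0 < decision_prob l T u t"
  using laplace_tail_bounds by (simp add: decision_prob_def)

lemma finite_nodes_upto:
  fixes T :: "nat list set"
  assumes "T \<subseteq> {v. set v \<subseteq> {..<\<beta>}}"
  shows "finite {u \<in> T. length u < n}"
  by (rule finite_subset[OF _ finite_lists_length_le[of "{..<\<beta>}" n]]) (use assms in auto)

lemma measure_agrees_upto:
  assumes l: "0 < l" and \<beta>: "0 < \<beta>" and T: "T \<subseteq> {v. set v \<subseteq> {..<\<beta>}}"
  shows "agrees_upto \<beta> score \<theta> T n \<in> sets (noise_space l)"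
    and "measure (noise_space l) (agrees_upto \<beta> score \<theta> T n) =
      (if full_tree_upto \<beta> T n
       then \<Prod>u\<in>{u \<in> T. length u < n}. decision_prob l T u (\<theta> - score u) else 0)"
proof -
  define A where "A u = (if u @ [0] \<in> T then {\<theta> - score u<..} else {..\<theta> - score u})" for u
  have A: "A u \<in> sets borel" for u
    by (simp add: A_def)
  have "agrees_upto \<beta> score \<theta> T n =
      (if full_tree_upto \<beta> T n then {\<eta>. \<forall>u\<in>{u \<in> T. length u < n}. \<eta> u \<in> A u} else {})"
    by (auto simp: agrees_upto_eq[OF T \<beta>] A_def)
  moreover have "measure (laplace l) (A u) = decision_prob l T u (\<theta> - score u)" for u
    by (simp add: A_def decision_prob_def measure_laplace_greaterThan[OF l] measure_laplace_atMost[OF l])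
  ultimately show "agrees_upto \<beta> score \<theta> T n \<in> sets (noise_space l)"
    and "measure (noise_space l) (agrees_upto \<beta> score \<theta> T n) =
      (if full_tree_upto \<beta> T n
       then \<Prod>u\<in>{u \<in> T. length u < n}. decision_prob l T u (\<theta> - score u) else 0)"
    using noise_space_cylinder[OF l finite_nodes_upto[OF T] A] by simp_all
qed

lemma tendsto_measure_agrees_upto:
  assumes l: "0 < l" and \<beta>: "0 < \<beta>" and T: "T \<subseteq> {v. set v \<subseteq> {..<\<beta>}}"
  shows "(\<lambda>n. measure (noise_space l) (agrees_upto \<beta> score \<theta> T n)) \<longlonglongrightarrow>
    measure (noise_space l) {\<eta> \<in> space (noise_space l). grown_tree \<beta> score \<theta> \<eta> = T}"
proof -
  interpret prob_space "noise_space l"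
    by (rule prob_space_noise_space[OF l])
  have "grown_tree \<beta> score \<theta> \<eta> = T \<longleftrightarrow> (\<forall>n. \<eta> \<in> agrees_upto \<beta> score \<theta> T n)" for \<eta>
  proof
    assume "\<forall>n. \<eta> \<in> agrees_upto \<beta> score \<theta> T n"
    then have "v \<in> grown_tree \<beta> score \<theta> \<eta> \<longleftrightarrow> v \<in> T" if "set v \<subseteq> {..<\<beta>}" for v
      using that by (auto simp: agrees_upto_def)
    then show "grown_tree \<beta> score \<theta> \<eta> = T"
      using T by (auto simp: grown_tree_def)
  qed (auto simp: agrees_upto_def)
  then have "{\<eta> \<in> space (noise_space l). grown_tree \<beta> score \<theta> \<eta> = T} = (\<Inter>n. agrees_upto \<beta> score \<theta> T n)"
    by auto
  moreover have "range (agrees_upto \<beta> score \<theta> T) \<subseteq> sets (noise_space l)"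
    using measure_agrees_upto(1)[OF l \<beta> T] by auto
  ultimately show ?thesis
    using finite_Lim_measure_decseq agrees_upto_decseq by simp
qed

section \<open>Neighbouring datasets\<close>

lemma prod_le_exp_sum_mult_prod:
  fixes f g r :: "'a \<Rightarrow> real"
  assumes "\<And>u. u \<in> Q \<Longrightarrow> 0 \<le> f u" "\<And>u. u \<in> Q \<Longrightarrow> f u \<le> exp (r u) * g u"
  shows "(\<Prod>u\<in>Q. f u) \<le> exp (\<Sum>u\<in>Q. r u) * (\<Prod>u\<in>Q. g u)"
proof (cases "finite Q")
  case True
  have "(\<Prod>u\<in>Q. f u) \<le> (\<Prod>u\<in>Q. exp (r u) * g u)"
    using assms by (intro prod_mono) auto
  also have "\<dots> = exp (\<Sum>u\<in>Q. r u) * (\<Prod>u\<in>Q. g u)"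
    using True by (simp add: prod.distrib exp_sum)
  finally show ?thesis .
qed simp

lemma decision_prob_le_exp_potential:
  assumes l: "0 < l" and yz: "y \<le> z"
  shows "decision_prob l T u y \<le> exp (tail_potential l z - tail_potential l y) * decision_prob l T u z"
proof (cases "u @ [0] \<in> T")
  case True
  then show ?thesis
    using laplace_tail_le_exp_potential[OF l yz] by (simp add: decision_prob_def)
next
  case False
  have "1 - laplace_tail l y \<le> 1 - laplace_tail l z"
    using laplace_tail_antimono[OF l yz] by simp
  also have "\<dots> \<le> exp (tail_potential l z - tail_potential l y) * (1 - laplace_tail l z)"
    using tail_potential_mono[OF l yz] laplace_tail_bounds(2)[OF l, of z] by simp
  finally show ?thesis
    using False by (simp add: decision_prob_def)
qed

lemma decision_prob_le_exp_if:
  assumes l: "0 < l" and yz: "y \<le> z" "z - y \<le> 1"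
  shows "decision_prob l T u z \<le> exp (if u @ [0] \<in> T then 0 else 1 / l) * decision_prob l T u y"
proof (cases "u @ [0] \<in> T")
  case True
  then show ?thesis
    using laplace_tail_antimono[OF l yz(1)] by (simp add: decision_prob_def)
next
  case False
  have "laplace_tail l (- z) \<le> exp (tail_potential l (- y) - tail_potential l (- z)) * laplace_tail l (- y)"
    using yz by (intro laplace_tail_le_exp_potential l) simp
  also have "\<dots> \<le> exp (1 / l) * laplace_tail l (- y)"
  proof -
    have "(z - y) / l \<le> 1 / l"
      using yz l by (simp add: divide_right_mono)
    then show ?thesis
      using tail_potential_diff_le[OF l, of "- z" "- y"] yz laplace_tail_bounds(1)[OF l, of "- y"]
      by (intro mult_right_mono) auto
  qed
  finally show ?thesis
    using False by (simp add: decision_prob_def laplace_tail_uminus)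
qed

lemma threshold_eq_min:
  "\<theta> - biased_count sdom D \<theta> \<delta> u = min \<delta> (\<theta> - real (node_count sdom D u) + real (length u) * \<delta>)"
  by (simp add: biased_count_def)

lemma threshold_add_point:
  "\<theta> - biased_count sdom (D + {#x#}) \<theta> \<delta> u =
    (if x \<in> sdom u then min \<delta> (\<theta> - real (node_count sdom D u) + real (length u) * \<delta> - 1)
     else \<theta> - biased_count sdom D \<theta> \<delta> u)"
  by (auto simp: biased_count_def node_count_def min_def max_def)

text \<open>The nodes containing x are nested, and each step down the chain adds \<open>\<delta>\<close> to the
  depth term without increasing the count.\<close>

lemma separated_depth_shifted_counts:
  assumes ss: "splitting_scheme \<Omega> \<beta> sdom" and \<delta>: "0 < \<delta>"
    and X: "\<And>u. u \<in> X \<Longrightarrow> set u \<subseteq> {..<\<beta>} \<and> x \<in> sdom u"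
  shows "separated \<delta> X (\<lambda>u. \<theta> - real (node_count sdom D u) + real (length u) * \<delta>)"
    (is "separated \<delta> X ?w")
proof -
  have gap: "\<delta> \<le> ?w v - ?w u" if "u \<in> X" "v \<in> X" "strict_prefix u v" for u v
  proof -
    obtain c cs where v: "v = u @ c # cs"
      using \<open>strict_prefix u v\<close> by (auto elim: strict_prefixE')
    then have "sdom v \<subseteq> sdom u"
      using splitting_scheme_append_subset[OF ss, of u "c # cs"] X[OF that(2)] by simp
    then have "real (node_count sdom D v) \<le> real (node_count sdom D u)"
      by (simp add: node_count_mono)
    moreover have "(real (length u) + 1) * \<delta> \<le> real (length v) * \<delta>"
      using \<delta> v by (intro mult_right_mono) auto
    ultimately show ?thesis by (simp add: algebra_simps)
  qed
  show ?thesis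
    unfolding separated_def
  proof (intro ballI impI)
    fix u v assume uv: "u \<in> X" "v \<in> X" "u \<noteq> v"
    then have "\<not> u \<parallel> v"
      using X splitting_scheme_not_parallel[OF ss] by blast
    with uv(3) have "strict_prefix u v \<or> strict_prefix v u"
      by (auto simp: parallel_def strict_prefix_def)
    then show "\<delta> \<le> \<bar>?w u - ?w v\<bar>"
      using gap uv by fastforce
  qed
qed

lemma card_path_leaves_le_1:
  assumes ss: "splitting_scheme \<Omega> \<beta> sdom" and T: "T \<subseteq> {v. set v \<subseteq> {..<\<beta>}}"
    and full: "full_tree_upto \<beta> T n"
  shows "card {u \<in> T. length u < n \<and> x \<in> sdom u \<and> u @ [0] \<notin> T} \<le> 1"
    (is "card ?L \<le> 1")
proof -
  have no_leaf_below: False if "u \<in> ?L" "v \<in> ?L" "strict_prefix u v" for u v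
  proof -
    obtain c cs where v: "v = u @ c # cs"
      using \<open>strict_prefix u v\<close> by (auto elim: strict_prefixE')
    have "u @ [c] = take (Suc (length u)) v" "c < \<beta>"
      using v that(2) T by auto
    then have "u @ [c] \<in> T"
      using full_tree_upto_take[OF full, of v] that(2) by simp
    then show False
      using full_tree_upto_snoc[OF full, of u c] that(1) \<open>c < \<beta>\<close> by simp
  qed
  have unique: "u = v" if "u \<in> ?L" "v \<in> ?L" for u v
  proof (rule ccontr)
    assume "u \<noteq> v"
    moreover have "\<not> u \<parallel> v"
      using that T splitting_scheme_not_parallel[OF ss] by blast
    ultimately have "strict_prefix u v \<or> strict_prefix v u"
      by (auto simp: parallel_def strict_prefix_def)
    then show False
      using no_leaf_below that by blast
  qed
  have "finite ?L"
    by (rule finite_subset[OF _ finite_nodes_upto[OF T, of n]]) auto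
  then have "card ?L \<le> Suc 0"
    using card_le_Suc0_iff_eq unique by blast
  then show ?thesis by simp
qed

lemma prod_decision_prob_add_point_le:
  assumes ss: "splitting_scheme \<Omega> \<beta> sdom" and l: "0 < l" and \<delta>: "0 < \<delta>"
    and Q: "finite Q" "\<And>u. u \<in> Q \<Longrightarrow> set u \<subseteq> {..<\<beta>}"
  shows "(\<Prod>u\<in>Q. decision_prob l T u (\<theta> - biased_count sdom (D + {#x#}) \<theta> \<delta> u))
    \<le> exp ((2 + 1 / (exp (\<delta> / l) - 1)) / l) *
      (\<Prod>u\<in>Q. decision_prob l T u (\<theta> - biased_count sdom D \<theta> \<delta> u))"
proof -
  define w where "w u = \<theta> - real (node_count sdom D u) + real (length u) * \<delta>" for u
  define r where "r u = tail_potential l (min \<delta> (w u)) - tail_potential l (min \<delta> (w u - 1))" for u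
  let ?X = "{u \<in> Q. x \<in> sdom u}"
  have factor: "decision_prob l T u (\<theta> - biased_count sdom (D + {#x#}) \<theta> \<delta> u)
      \<le> exp (if x \<in> sdom u then r u else 0) * decision_prob l T u (\<theta> - biased_count sdom D \<theta> \<delta> u)" for u
    using decision_prob_le_exp_potential[OF l, of "min \<delta> (w u - 1)" "min \<delta> (w u)" T u]
    unfolding threshold_add_point unfolding threshold_eq_min w_def[symmetric] by (simp add: r_def)
  have "(\<Prod>u\<in>Q. decision_prob l T u (\<theta> - biased_count sdom (D + {#x#}) \<theta> \<delta> u))
      \<le> exp (\<Sum>u\<in>Q. if x \<in> sdom u then r u else 0) *
        (\<Prod>u\<in>Q. decision_prob l T u (\<theta> - biased_count sdom D \<theta> \<delta> u))"
    by (rule prod_le_exp_sum_mult_prod[OF less_imp_le[OF decision_prob_pos[OF l]] factor])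
  also have "(\<Sum>u\<in>Q. if x \<in> sdom u then r u else 0) = (\<Sum>u\<in>?X. r u)"
    using Q(1) by (simp add: sum.inter_filter)
  also have "(\<Sum>u\<in>?X. r u) \<le> (2 + 1 / (exp (\<delta> / l) - 1)) / l"
    unfolding r_def
  proof (rule sum_capped_potential_increments_le[OF l \<delta>])
    show "finite ?X"
      using Q(1) by simp
    show "separated \<delta> ?X w"
      unfolding w_def using Q(2) by (intro separated_depth_shifted_counts[OF ss \<delta>]) auto
  qed
  finally show ?thesis
    using decision_prob_pos[OF l] by (simp add: mult_right_mono prod_nonneg less_imp_le)
qed

lemma prod_decision_prob_le_add_point:
  assumes ss: "splitting_scheme \<Omega> \<beta> sdom" and l: "0 < l"
    and T: "T \<subseteq> {v. set v \<subseteq> {..<\<beta>}}" and full: "full_tree_upto \<beta> T n"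
  shows "(\<Prod>u\<in>{u \<in> T. length u < n}. decision_prob l T u (\<theta> - biased_count sdom D \<theta> \<delta> u))
    \<le> exp (1 / l) *
      (\<Prod>u\<in>{u \<in> T. length u < n}. decision_prob l T u (\<theta> - biased_count sdom (D + {#x#}) \<theta> \<delta> u))"
proof -
  let ?Q = "{u \<in> T. length u < n}"
  define L where "L = {u \<in> T. length u < n \<and> x \<in> sdom u \<and> u @ [0] \<notin> T}"
  define w where "w u = \<theta> - real (node_count sdom D u) + real (length u) * \<delta>" for u
  have factor: "decision_prob l T u (\<theta> - biased_count sdom D \<theta> \<delta> u)
      \<le> exp (if u \<in> L then 1 / l else 0) *
        decision_prob l T u (\<theta> - biased_count sdom (D + {#x#}) \<theta> \<delta> u)" if "u \<in> ?Q" for u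
    using that decision_prob_le_exp_if[OF l, of "min \<delta> (w u - 1)" "min \<delta> (w u)" T u]
    unfolding threshold_add_point unfolding threshold_eq_min w_def[symmetric] by (auto simp: L_def)
  have "(\<Prod>u\<in>?Q. decision_prob l T u (\<theta> - biased_count sdom D \<theta> \<delta> u))
      \<le> exp (\<Sum>u\<in>?Q. if u \<in> L then 1 / l else 0) *
        (\<Prod>u\<in>?Q. decision_prob l T u (\<theta> - biased_count sdom (D + {#x#}) \<theta> \<delta> u))"
    by (rule prod_le_exp_sum_mult_prod[OF less_imp_le[OF decision_prob_pos[OF l]] factor])
  also have "(\<Sum>u\<in>?Q. if u \<in> L then 1 / l else 0) = real (card L) / l"
  proof -
    have "L \<subseteq> ?Q"
      by (auto simp: L_def)
    then have "?Q \<inter> L = L"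
      by blast
    then show ?thesis
      using finite_nodes_upto[OF T, of n] by (simp add: sum.If_cases)
  qed
  also have "\<dots> \<le> 1 / l"
    using card_path_leaves_le_1[OF ss T full, of x] l by (simp add: L_def divide_right_mono)
  finally show ?thesis
    using decision_prob_pos[OF l] by (simp add: mult_right_mono prod_nonneg less_imp_le)
qed

lemma grown_tree_prob_le_if_agrees_upto_le:
  assumes l: "0 < l" and \<beta>: "0 < \<beta>" and T: "T \<subseteq> {v. set v \<subseteq> {..<\<beta>}}"
    and le: "\<And>n. measure (noise_space l) (agrees_upto \<beta> score \<theta> T n)
      \<le> c * measure (noise_space l) (agrees_upto \<beta> score' \<theta> T n)"
  shows "measure (noise_space l) {\<eta> \<in> space (noise_space l). grown_tree \<beta> score \<theta> \<eta> = T}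
    \<le> c * measure (noise_space l) {\<eta> \<in> space (noise_space l). grown_tree \<beta> score' \<theta> \<eta> = T}"
  using tendsto_measure_agrees_upto[OF l \<beta> T]
  by (rule LIMSEQ_le[OF _ tendsto_mult_left[OF tendsto_measure_agrees_upto[OF l \<beta> T]]]) (use le in auto)

lemma measure_agrees_upto_neighbours_le:
  fixes \<theta> :: real and n :: nat
  assumes ss: "splitting_scheme \<Omega> \<beta> sdom" and l: "0 < l" and \<delta>: "0 < \<delta>"
    and \<epsilon>: "(2 + 1 / (exp (\<delta> / l) - 1)) / l \<le> \<epsilon>" and T: "T \<subseteq> {v. set v \<subseteq> {..<\<beta>}}"
  defines "P s \<equiv> measure (noise_space l) (agrees_upto \<beta> s \<theta> T n)"
  shows "P (biased_count sdom D \<theta> \<delta>) \<le> exp \<epsilon> * P (biased_count sdom (D + {#x#}) \<theta> \<delta>)"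
    and "P (biased_count sdom (D + {#x#}) \<theta> \<delta>) \<le> exp \<epsilon> * P (biased_count sdom D \<theta> \<delta>)"
proof -
  let ?s = "biased_count sdom D \<theta> \<delta>" and ?s' = "biased_count sdom (D + {#x#}) \<theta> \<delta>"
  have \<beta>: "0 < \<beta>"
    using ss by (simp add: splitting_scheme_def)
  have "1 / l \<le> (2 + 1 / (exp (\<delta> / l) - 1)) / l"
    using l \<delta> by (intro divide_right_mono) (auto simp: add_increasing)
  then have exp_le: "exp ((2 + 1 / (exp (\<delta> / l) - 1)) / l) \<le> exp \<epsilon>" "exp (1 / l) \<le> exp \<epsilon>"
    using \<epsilon> by simp_all
  have "P ?s' \<le> exp \<epsilon> * P ?s \<and> P ?s \<le> exp \<epsilon> * P ?s'"
  proof (cases "full_tree_upto \<beta> T n")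
    case full: True
    let ?F = "\<lambda>s. \<Prod>u\<in>{u \<in> T. length u < n}. decision_prob l T u (\<theta> - s u)"
    have "?F ?s' \<le> exp ((2 + 1 / (exp (\<delta> / l) - 1)) / l) * ?F ?s"
      using T by (intro prod_decision_prob_add_point_le[OF ss l \<delta>] finite_nodes_upto) auto
    moreover have "?F ?s \<le> exp (1 / l) * ?F ?s'"
      by (rule prod_decision_prob_le_add_point[OF ss l T full])
    moreover have "0 \<le> ?F s" for s
      using decision_prob_pos[OF l] by (simp add: prod_nonneg less_imp_le)
    moreover have F: "P s = ?F s" for s
      using measure_agrees_upto(2)[OF l \<beta> T] full by (simp add: P_def)
    ultimately show ?thesis
      unfolding F using exp_le by (meson mult_right_mono order_trans)
  qed (simp add: P_def measure_agrees_upto(2)[OF l \<beta> T])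
  then show "P ?s \<le> exp \<epsilon> * P ?s'" and "P ?s' \<le> exp \<epsilon> * P ?s"
    by simp_all
qed

lemma privtree_prob_neighbours_le:
  assumes ss: "splitting_scheme \<Omega> \<beta> sdom" and l: "0 < l" and \<delta>: "0 < \<delta>"
    and \<epsilon>: "(2 + 1 / (exp (\<delta> / l) - 1)) / l \<le> \<epsilon>"
  shows "privtree_prob \<beta> sdom D l \<theta> \<delta> T \<le> exp \<epsilon> * privtree_prob \<beta> sdom (D + {#x#}) l \<theta> \<delta> T \<and>
    privtree_prob \<beta> sdom (D + {#x#}) l \<theta> \<delta> T \<le> exp \<epsilon> * privtree_prob \<beta> sdom D l \<theta> \<delta> T"
proof (cases "T \<subseteq> {v. set v \<subseteq> {..<\<beta>}}")
  case True
  have \<beta>: "0 < \<beta>"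
    using ss by (simp add: splitting_scheme_def)
  show ?thesis
    unfolding privtree_prob_def privtree_output_eq_grown_tree
    using measure_agrees_upto_neighbours_le[OF ss l \<delta> \<epsilon> True]
    by (intro conjI grown_tree_prob_le_if_agrees_upto_le[OF l \<beta> True])
next
  case False
  then have "{\<eta> \<in> space (noise_space l). grown_tree \<beta> s \<theta> \<eta> = T} = {}" for s
    by (auto simp: grown_tree_def)
  then show ?thesis
    by (simp add: privtree_prob_def privtree_output_eq_grown_tree)
qed

theorem theorem1:
  fixes \<Omega> :: "'a set" and \<beta> :: nat and sdom :: "nat list \<Rightarrow> 'a set"
    and \<gamma> \<epsilon> l \<theta> :: real
  assumes "splitting_scheme \<Omega> \<beta> sdom"
    and "\<gamma> > 0" and "\<epsilon> > 0"
    and "l \<ge> (2 * exp \<gamma> - 1) / (exp \<gamma> - 1) * (1 / \<epsilon>)"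
  shows "\<forall>D x T. set_mset D \<subseteq> \<Omega> \<and> x \<in> \<Omega> \<longrightarrow>
      privtree_prob \<beta> sdom D l \<theta> (\<gamma> * l) T
        \<le> exp \<epsilon> * privtree_prob \<beta> sdom (D + {#x#}) l \<theta> (\<gamma> * l) T \<and>
      privtree_prob \<beta> sdom (D + {#x#}) l \<theta> (\<gamma> * l) T
        \<le> exp \<epsilon> * privtree_prob \<beta> sdom D l \<theta> (\<gamma> * l) T"
proof -
  define C where "C = (2 * exp \<gamma> - 1) / (exp \<gamma> - 1)"
  have "1 < exp \<gamma>"
    using assms(2) by simp
  then have C: "C = 2 + 1 / (exp \<gamma> - 1)"
    by (simp add: C_def field_simps)
  then have "0 < C"
    using \<open>1 < exp \<gamma>\<close> by (simp add: add_pos_pos)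
  have "C / \<epsilon> \<le> l"
    using assms(4) by (simp add: C_def)
  moreover have "0 < C / \<epsilon>"
    using \<open>0 < C\<close> assms(3) by simp
  ultimately have l: "0 < l"
    by linarith
  with \<open>C / \<epsilon> \<le> l\<close> have "C / l \<le> \<epsilon>"
    using assms(3) by (simp add: field_simps)
  moreover have "\<gamma> * l / l = \<gamma>"
    using l by simp
  ultimately have "(2 + 1 / (exp (\<gamma> * l / l) - 1)) / l \<le> \<epsilon>"
    using C by simp
  with privtree_prob_neighbours_le[OF assms(1) l] show ?thesis
    using assms(2) l by simp
qed

end
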